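(* Let $A\in\mathbb{R}^{m\times n}$ with columns $A_1,\dots,A_n$, let $y\in\mathbb{R}^m$, $\gamma>0$ and $k\in\{1,\dots,n-1\}$. Let $x^*$ be an optimal solution of (CC) with optimal value $\zeta_{CC}$, set $\varepsilon^*=y-Ax^*$ and $\delta_i=(A_i'\varepsilon^* )^2$ for $i=1,\dots,n$, let $\delta_{[j]}$ denote the $j$-th largest entry of the vector $\delta=(\delta_1,\dots,\delta_n)$, and let $\bar\zeta$ be any number with $\bar\zeta\ge\zeta_C$. Then every optimal solution $(x,z)$ of (MIPC) satisfies, for each $i$: $z_i=0$ if $\delta_i\le\delta_{[k+1]}$ and $\zeta_{CC}-\gamma(\delta_i-\delta_{[k]})>\bar\zeta$; and $z_i=1$ if $\delta_i\ge\delta_{[k]}$ and $\zeta_{CC}+\gamma(\delta_i-\delta_{[k+1]})>\bar\zeta$.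
   Context: For $x_i\in\mathbb{R}$, $z_i\ge 0$ the perspective term $x_i^2/z_i$ is defined with the convention $x_i^2/z_i=0$ if $x_i=z_i=0$ and $x_i^2/z_i=+\infty$ if $z_i=0$, $x_i\neq 0$. (MIPC) is the problem $\zeta_C=\min_{x,z}\ \|y-Ax\|_2^2+\frac1\gamma\sum_{i=1}^n \frac{x_i^2}{z_i}$ subject to $\sum_{i=1}^n z_i\le k$, $x_i(1-z_i)=0$ for $i=1,\dots,n$, $x\in\mathbb{R}^n$, $z\in\{0,1\}^n$ (a mixed-integer formulation of $\min_x \|y-Ax\|_2^2+\frac1\gamma\|x\|_2^2$ s.t. $\|x\|_0\le k$). (CC) is its convex (perspective) relaxation: $\zeta_{CC}=\min_{x,z}\ \|y-Ax\|_2^2+\frac1\gamma\sum_{i=1}^n \frac{x_i^2}{z_i}$ subject to $\sum_{i=1}^n z_i\le k$, $x\in\mathbb{R}^n$, $z\in[0,1]^n$; an optimal solution $x^*$ means the $x$-part of an optimal pair $(x^*,z^* )$. $A_i'$ denotes the transpose of the $i$-th column of $A$. *)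

theory Defs
  imports "HOL-Analysis.Analysis" "HOL-Library.Multiset" "HOL-Library.Extended_Real"
begin

definition persp :: "real \<Rightarrow> real \<Rightarrow> ereal" where
  "persp a b = (if b = 0 then (if a = 0 then 0 else \<infinity>) else ereal (a^2 / b))"

definition obj :: "real^'n^'m \<Rightarrow> real^'m \<Rightarrow> real \<Rightarrow> real^'n \<Rightarrow> real^'n \<Rightarrow> ereal" where
  "obj A y \<gamma> x z = ereal ((norm (y - A *v x))^2) + ereal (1/\<gamma>) * (\<Sum>i\<in>UNIV. persp (x$i) (z$i))"

definition feas_MIPC :: "nat \<Rightarrow> real^'n \<Rightarrow> real^'n \<Rightarrow> bool" where
  "feas_MIPC k x z \<longleftrightarrow> (\<Sum>i\<in>UNIV. z$i) \<le> real k \<and>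
     (\<forall>i. x$i * (1 - z$i) = 0) \<and> (\<forall>i. z$i \<in> {0,1})"

definition feas_CC :: "nat \<Rightarrow> real^'n \<Rightarrow> real^'n \<Rightarrow> bool" where
  "feas_CC k x z \<longleftrightarrow> (\<Sum>i\<in>UNIV. z$i) \<le> real k \<and> (\<forall>i. 0 \<le> z$i \<and> z$i \<le> 1)"

definition zeta_C :: "real^'n^'m \<Rightarrow> real^'m \<Rightarrow> real \<Rightarrow> nat \<Rightarrow> ereal" where
  "zeta_C A y \<gamma> k = (INF p\<in>{(x,z). feas_MIPC k x z}. obj A y \<gamma> (fst p) (snd p))"

definition zeta_CC :: "real^'n^'m \<Rightarrow> real^'m \<Rightarrow> real \<Rightarrow> nat \<Rightarrow> ereal" where
  "zeta_CC A y \<gamma> k = (INF p\<in>{(x,z). feas_CC k x z}. obj A y \<gamma> (fst p) (snd p))"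

definition opt_MIPC :: "real^'n^'m \<Rightarrow> real^'m \<Rightarrow> real \<Rightarrow> nat \<Rightarrow> real^'n \<Rightarrow> real^'n \<Rightarrow> bool" where
  "opt_MIPC A y \<gamma> k x z \<longleftrightarrow> feas_MIPC k x z \<and> obj A y \<gamma> x z = zeta_C A y \<gamma> k"

definition opt_CC :: "real^'n^'m \<Rightarrow> real^'m \<Rightarrow> real \<Rightarrow> nat \<Rightarrow> real^'n \<Rightarrow> real^'n \<Rightarrow> bool" where
  "opt_CC A y \<gamma> k x z \<longleftrightarrow> feas_CC k x z \<and> obj A y \<gamma> x z = zeta_CC A y \<gamma> k"

definition kth_largest :: "real^'n \<Rightarrow> nat \<Rightarrow> real" where
  "kth_largest d j = rev (sorted_list_of_multiset (image_mset (\<lambda>i. d$i) (mset_set (UNIV::'n set)))) ! (j - 1)"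

end

theory Submission
  imports Defs
begin

text \<open>Let \<open>r = y - A x\<^sup>*\<close> be the residual of the relaxation and \<open>\<delta>\<^sub>j = (A\<^sub>j' r)\<^sup>2\<close>.
  Weak duality with the dual point \<open>r\<close> bounds the objective of any \<open>(x, z)\<close> from below by
  \<open>2 r'y - r'r - \<gamma> \<Sum>\<^sub>j z\<^sub>j \<delta>\<^sub>j\<close>, and the first-order optimality condition of the convex
  relaxation, tested against \<open>z = 1\<^sub>T\<close>, \<open>x\<^sub>j = \<gamma> z\<^sub>j A\<^sub>j' r\<close> with \<open>|T| \<le> k\<close>, turns this bound into
  \<open>\<zeta>\<^sub>C\<^sub>C + \<gamma> (\<delta>(T) - \<delta>(S))\<close> when \<open>z = 1\<^sub>S\<close> is integral. If an optimal solution of (MIPC)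
  violated a screening rule, exchanging one index of its support \<open>S\<close> against an index \<open>j\<close> with
  \<open>\<delta>\<^sub>j \<ge> \<delta>\<^sub>[\<^sub>k\<^sub>]\<close> (resp. with \<open>\<delta>\<^sub>j \<le> \<delta>\<^sub>[\<^sub>k\<^sub>+\<^sub>1\<^sub>]\<close>) would produce a set \<open>T\<close> whose bound
  exceeds the given upper bound on \<open>\<zeta>\<^sub>C\<close>.\<close>

subsection \<open>Perspective function\<close>

definition persp_dom :: "real^'n \<Rightarrow> real^'n \<Rightarrow> bool" where
  "persp_dom x z \<longleftrightarrow> (\<forall>j. 0 \<le> z$j \<and> (z$j = 0 \<longrightarrow> x$j = 0))"

definition persp_sum :: "real^'n \<Rightarrow> real^'n \<Rightarrow> real" where
  "persp_sum x z = (\<Sum>j\<in>UNIV. (x$j)\<^sup>2 / z$j)"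

definition obj_real :: "real^'n^'m \<Rightarrow> real^'m \<Rightarrow> real \<Rightarrow> real^'n \<Rightarrow> real^'n \<Rightarrow> real" where
  "obj_real A y \<gamma> x z = (norm (y - A *v x))\<^sup>2 + (1/\<gamma>) * persp_sum x z"

lemma obj_eq_obj_real:
  assumes "persp_dom x z"
  shows "obj A y \<gamma> x z = ereal (obj_real A y \<gamma> x z)"
proof -
  have "persp (x$j) (z$j) = ereal ((x$j)\<^sup>2 / z$j)" for j
    using assms by (auto simp: persp_def persp_dom_def)
  then show ?thesis by (simp add: obj_def obj_real_def persp_sum_def)
qed

lemma persp_dom_if_obj_finite:
  assumes "0 < \<gamma>" "\<forall>j. 0 \<le> z$j" "obj A y \<gamma> x z \<noteq> \<infinity>"
  shows "persp_dom x z"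
proof (rule ccontr)
  assume "\<not> persp_dom x z"
  then obtain j where "z$j = 0" "x$j \<noteq> 0" using assms(2) by (auto simp: persp_dom_def)
  then have "(\<Sum>j\<in>UNIV. persp (x$j) (z$j)) = \<infinity>"
    unfolding sum_Pinfty by (auto simp: persp_def)
  with assms(1,3) show False by (simp add: obj_def)
qed

lemma persp_ge_linear:
  fixes x z c :: real
  assumes "0 \<le> z" "z = 0 \<longrightarrow> x = 0"
  shows "2*x*c - c\<^sup>2*z \<le> x\<^sup>2/z"
proof (cases "z = 0")
  case False
  with assms(1) have "0 < z" by simp
  then have "(x - c*z)\<^sup>2/z = x\<^sup>2/z - 2*x*c + c\<^sup>2*z"
    by (simp add: power2_eq_square field_simps)
  moreover have "0 \<le> (x - c*z)\<^sup>2/z" using \<open>0 < z\<close> by simp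
  ultimately show ?thesis by simp
qed (use assms in simp)

text \<open>Joint convexity of \<open>x\<^sup>2/z\<close>: at the mixture it equals \<open>2Xc - c\<^sup>2Z\<close> with \<open>c = X/Z\<close>,
  which is affine in \<open>(X, Z)\<close> and bounded termwise by \<open>persp_ge_linear\<close>.\<close>
lemma persp_convex:
  fixes x x' z z' t :: real
  assumes "0 \<le> z" "0 \<le> z'" "z = 0 \<longrightarrow> x = 0" "z' = 0 \<longrightarrow> x' = 0" "0 \<le> t" "t \<le> 1"
  shows "((1-t)*x + t*x')\<^sup>2 / ((1-t)*z + t*z') \<le> (1-t)*(x\<^sup>2/z) + t*(x'\<^sup>2/z')"
proof -
  define X Z where "X = (1-t)*x + t*x'" and "Z = (1-t)*z + t*z'"
  show ?thesis
  proof (cases "Z = 0")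
    case True
    have "0 \<le> (1-t)*(x\<^sup>2/z) + t*(x'\<^sup>2/z')" using assms by simp
    with True show ?thesis by (simp add: Z_def)
  next
    case False
    define c where "c = X/Z"
    have "X\<^sup>2/Z = 2*X*c - c\<^sup>2*Z"
      using False by (simp add: c_def power2_eq_square field_simps)
    also have "\<dots> = (1-t)*(2*x*c - c\<^sup>2*z) + t*(2*x'*c - c\<^sup>2*z')"
      by (simp add: X_def Z_def algebra_simps)
    also have "\<dots> \<le> (1-t)*(x\<^sup>2/z) + t*(x'\<^sup>2/z')"
      using persp_ge_linear[OF assms(1,3)] persp_ge_linear[OF assms(2,4)] assms(5,6)
      by (intro add_mono mult_left_mono) auto
    finally show ?thesis by (simp add: X_def Z_def)
  qed
qed

lemma persp_sum_convex:
  assumes "persp_dom x z" "persp_dom x' z'" "0 \<le> t" "t \<le> 1"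
  shows "persp_sum ((1-t) *\<^sub>R x + t *\<^sub>R x') ((1-t) *\<^sub>R z + t *\<^sub>R z')
           \<le> (1-t) * persp_sum x z + t * persp_sum x' z'"
proof -
  have "((1-t)*x$j + t*x'$j)\<^sup>2 / ((1-t)*z$j + t*z'$j) \<le> (1-t)*((x$j)\<^sup>2/z$j) + t*((x'$j)\<^sup>2/z'$j)"
    for j using assms by (intro persp_convex) (auto simp: persp_dom_def)
  then have "persp_sum ((1-t) *\<^sub>R x + t *\<^sub>R x') ((1-t) *\<^sub>R z + t *\<^sub>R z')
        \<le> (\<Sum>j\<in>UNIV. (1-t)*((x$j)\<^sup>2/z$j) + t*((x'$j)\<^sup>2/z'$j))"
    unfolding persp_sum_def by (intro sum_mono) simp
  also have "\<dots> = (1-t) * persp_sum x z + t * persp_sum x' z'"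
    by (simp add: persp_sum_def sum.distrib sum_distrib_left)
  finally show ?thesis .
qed

lemma persp_dom_convex:
  assumes "persp_dom x z" "persp_dom x' z'" "0 \<le> t" "t \<le> 1"
  shows "persp_dom ((1-t) *\<^sub>R x + t *\<^sub>R x') ((1-t) *\<^sub>R z + t *\<^sub>R z')"
  unfolding persp_dom_def
proof (intro allI conjI impI)
  fix j
  have "0 \<le> (1-t) * z$j" "0 \<le> t * z'$j"
    using assms by (auto simp: persp_dom_def)
  then show "0 \<le> ((1-t) *\<^sub>R z + t *\<^sub>R z')$j" by simp
  assume "((1-t) *\<^sub>R z + t *\<^sub>R z')$j = 0"
  then have "(1-t) * z$j + t * z'$j = 0" by simp
  with \<open>0 \<le> (1-t) * z$j\<close> \<open>0 \<le> t * z'$j\<close> have "(1-t) * z$j = 0" "t * z'$j = 0" by linarith+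
  then have "(1-t) * x$j = 0" "t * x'$j = 0"
    using assms by (auto simp: persp_dom_def)
  then show "((1-t) *\<^sub>R x + t *\<^sub>R x')$j = 0" by auto
qed

lemma feas_CC_convex:
  assumes "feas_CC k x z" "feas_CC k x' z'" "0 \<le> t" "t \<le> 1"
  shows "feas_CC k ((1-t) *\<^sub>R x + t *\<^sub>R x') ((1-t) *\<^sub>R z + t *\<^sub>R z')"
proof -
  have box: "0 \<le> z$j" "z$j \<le> 1" "0 \<le> z'$j" "z'$j \<le> 1" for j
    using assms(1,2) by (auto simp: feas_CC_def)
  have "(\<Sum>j\<in>UNIV. ((1-t) *\<^sub>R z + t *\<^sub>R z')$j) = (1-t) * (\<Sum>j\<in>UNIV. z$j) + t * (\<Sum>j\<in>UNIV. z'$j)"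
    by (simp add: sum.distrib sum_distrib_left)
  also have "\<dots> \<le> (1-t) * real k + t * real k"
    using assms by (intro add_mono mult_left_mono) (auto simp: feas_CC_def)
  finally have "(\<Sum>j\<in>UNIV. ((1-t) *\<^sub>R z + t *\<^sub>R z')$j) \<le> real k" by (simp add: algebra_simps)
  moreover have "0 \<le> (1-t) * z$j + t * z'$j \<and> (1-t) * z$j + t * z'$j \<le> 1" for j
    using convex_bound_le[of "z$j" 1 "z'$j" "1-t" t] box[of j] assms(3,4) by simp
  ultimately show ?thesis by (simp add: feas_CC_def)
qed

subsection \<open>Optimality conditions of the relaxation\<close>

lemma inner_matrix_vector_mult:
  fixes A :: "real^'n^'m"
  shows "r \<bullet> (A *v v) = (\<Sum>j\<in>UNIV. v$j * (column j A \<bullet> r))"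
proof -
  have "r \<bullet> (A *v v) = (\<Sum>i\<in>UNIV. \<Sum>j\<in>UNIV. v$j * (A$i$j * r$i))"
    by (simp add: inner_vec_def matrix_vector_mult_def sum_distrib_left mult_ac)
  also have "\<dots> = (\<Sum>j\<in>UNIV. \<Sum>i\<in>UNIV. v$j * (A$i$j * r$i))"
    by (rule sum.swap)
  finally show ?thesis
    by (simp add: inner_vec_def column_def sum_distrib_left)
qed

lemma nonneg_if_nonneg_near_zero:
  fixes B C :: real
  assumes "\<And>t. 0 < t \<Longrightarrow> t < 1 \<Longrightarrow> 0 \<le> t * B + t\<^sup>2 * C"
  shows "0 \<le> B"
proof -
  have "((\<lambda>t. B + t * C) \<longlongrightarrow> B + 0 * C) (at_right 0)"
    by (intro tendsto_intros)
  moreover have "\<forall>\<^sub>F t in at_right 0. 0 \<le> B + t * C"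
    unfolding eventually_at_right_field
  proof (intro exI[of _ 1] conjI allI impI)
    fix t :: real assume "0 < t" "t < 1"
    then have "0 \<le> t * (B + t * C)" using assms[of t] by (simp add: power2_eq_square algebra_simps)
    with \<open>0 < t\<close> show "0 \<le> B + t * C" by (simp add: zero_le_mult_iff)
  qed simp
  ultimately show ?thesis by (simp add: tendsto_lowerbound)
qed

text \<open>The one-sided derivative along the segment from the minimiser to \<open>(x, z)\<close> is nonnegative;
  the penalty is not differentiated, only bounded by its convexity.\<close>
lemma obj_real_first_order:
  fixes A :: "real^'n^'m"
  assumes "0 < \<gamma>"
    and minimal: "\<And>x z. feas_CC k x z \<Longrightarrow> persp_dom x z \<Longrightarrow> obj_real A y \<gamma> xs zs \<le> obj_real A y \<gamma> x z"
    and "feas_CC k xs zs" "persp_dom xs zs" "feas_CC k x z" "persp_dom x z"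
  shows "2 * ((y - A *v xs) \<bullet> (A *v x)) - (1/\<gamma>) * persp_sum x z
           \<le> 2 * ((y - A *v xs) \<bullet> (A *v xs)) - (1/\<gamma>) * persp_sum xs zs"
proof -
  define r d where "r = y - A *v xs" and "d = A *v (x - xs)"
  have "0 \<le> t * ((1/\<gamma>) * (persp_sum x z - persp_sum xs zs) - 2 * (r \<bullet> d)) + t\<^sup>2 * (d \<bullet> d)"
    if "0 < t" "t < 1" for t
  proof -
    define xt zt where "xt = (1-t) *\<^sub>R xs + t *\<^sub>R x" and "zt = (1-t) *\<^sub>R zs + t *\<^sub>R z"
    have "y - A *v xt = r - t *\<^sub>R d"
      by (simp add: xt_def r_def d_def matrix_vector_right_distrib matrix_vector_mult_scaleR
          matrix_vector_mult_diff_distrib algebra_simps)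
    then have "(norm (y - A *v xt))\<^sup>2 = (r - t *\<^sub>R d) \<bullet> (r - t *\<^sub>R d)"
      by (simp only: power2_norm_eq_inner)
    also have "\<dots> = r \<bullet> r - 2 * t * (r \<bullet> d) + t\<^sup>2 * (d \<bullet> d)"
      by (simp add: inner_diff_left inner_diff_right inner_commute power2_eq_square algebra_simps)
    finally have "(norm (y - A *v xt))\<^sup>2 = r \<bullet> r - 2 * t * (r \<bullet> d) + t\<^sup>2 * (d \<bullet> d)" .
    moreover have "(1/\<gamma>) * persp_sum xt zt \<le> (1/\<gamma>) * ((1-t) * persp_sum xs zs + t * persp_sum x z)"
      unfolding xt_def zt_def using assms that
      by (intro mult_left_mono persp_sum_convex) auto
    moreover have "obj_real A y \<gamma> xs zs \<le> obj_real A y \<gamma> xt zt"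
      unfolding xt_def zt_def using assms that
      by (intro minimal feas_CC_convex persp_dom_convex) auto
    ultimately show ?thesis
      by (simp add: obj_real_def r_def power2_norm_eq_inner algebra_simps)
  qed
  then have "0 \<le> (1/\<gamma>) * (persp_sum x z - persp_sum xs zs) - 2 * (r \<bullet> d)"
    by (rule nonneg_if_nonneg_near_zero)
  then show ?thesis
    by (simp add: r_def d_def matrix_vector_mult_diff_distrib inner_diff_right algebra_simps)
qed

text \<open>Weak duality: \<open>\<parallel>w\<parallel>\<^sup>2 \<ge> 2 r'w - r'r\<close> for the residual \<open>w\<close>, and \<open>persp_ge_linear\<close> with
  \<open>c = \<gamma> A\<^sub>j' r\<close> on each perspective term.\<close>
lemma obj_real_weak_duality:
  fixes A :: "real^'n^'m"
  assumes "0 < \<gamma>" "persp_dom x z"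
  shows "2 * (r \<bullet> y) - r \<bullet> r - \<gamma> * (\<Sum>j\<in>UNIV. z$j * (column j A \<bullet> r)\<^sup>2) \<le> obj_real A y \<gamma> x z"
proof -
  define w where "w = y - A *v x"
  have "0 \<le> (w - r) \<bullet> (w - r)" by simp
  then have norm_bound: "2 * (r \<bullet> w) - r \<bullet> r \<le> (norm w)\<^sup>2"
    by (simp add: power2_norm_eq_inner inner_diff inner_commute algebra_simps)
  have "2 * (x$j) * (column j A \<bullet> r) - \<gamma> * (z$j * (column j A \<bullet> r)\<^sup>2) \<le> (1/\<gamma>) * ((x$j)\<^sup>2 / z$j)" for j
  proof -
    have "2 * (x$j) * (\<gamma> * (column j A \<bullet> r)) - (\<gamma> * (column j A \<bullet> r))\<^sup>2 * z$j \<le> (x$j)\<^sup>2 / z$j"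
      using assms(2) by (intro persp_ge_linear) (auto simp: persp_dom_def)
    then have "(1/\<gamma>) * (2 * (x$j) * (\<gamma> * (column j A \<bullet> r)) - (\<gamma> * (column j A \<bullet> r))\<^sup>2 * z$j)
               \<le> (1/\<gamma>) * ((x$j)\<^sup>2 / z$j)"
      using assms(1) by (intro mult_left_mono) auto
    moreover have "(1/\<gamma>) * (2 * (x$j) * (\<gamma> * (column j A \<bullet> r)) - (\<gamma> * (column j A \<bullet> r))\<^sup>2 * z$j)
                   = 2 * (x$j) * (column j A \<bullet> r) - \<gamma> * (z$j * (column j A \<bullet> r)\<^sup>2)"
      using assms(1) by (simp add: power2_eq_square field_simps)
    ultimately show ?thesis by simp
  qed
  then have "(\<Sum>j\<in>UNIV. 2 * (x$j) * (column j A \<bullet> r) - \<gamma> * (z$j * (column j A \<bullet> r)\<^sup>2))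
             \<le> (\<Sum>j\<in>UNIV. (1/\<gamma>) * ((x$j)\<^sup>2 / z$j))"
    by (rule sum_mono)
  then have "2 * (r \<bullet> (A *v x)) - \<gamma> * (\<Sum>j\<in>UNIV. z$j * (column j A \<bullet> r)\<^sup>2) \<le> (1/\<gamma>) * persp_sum x z"
    by (simp add: persp_sum_def inner_matrix_vector_mult sum_subtractf sum_distrib_left mult_ac)
  with norm_bound show ?thesis
    by (simp add: obj_real_def w_def inner_diff_right)
qed

lemma sum_indicator_mult:
  fixes f :: "'n::finite \<Rightarrow> real"
  shows "(\<Sum>j\<in>UNIV. (if j \<in> T then 1 else 0) * f j) = sum f T"
proof -
  have "(\<Sum>j\<in>UNIV. (if j \<in> T then 1 else 0) * f j) = (\<Sum>j\<in>UNIV. if j \<in> T then f j else 0)"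
    by (intro sum.cong) auto
  then show ?thesis by (simp add: sum.If_cases)
qed

definition screening_score :: "real^'n^'m \<Rightarrow> real^'m \<Rightarrow> real^'n \<Rightarrow> real^'n" where
  "screening_score A y xs = (\<chi> j. (column j A \<bullet> (y - A *v xs))\<^sup>2)"

text \<open>Testing the first-order condition against \<open>z = 1\<^sub>T\<close>, \<open>x\<^sub>j = \<gamma> z\<^sub>j A\<^sub>j' r\<close> gives
  \<open>2 r'A x\<^sup>* - \<gamma>\<^sup>-\<^sup>1 persp_sum x\<^sup>* z\<^sup>* \<ge> \<gamma> \<delta>(T)\<close>; weak duality at \<open>r\<close> does the rest.\<close>
lemma obj_real_lower_bound:
  fixes A :: "real^'n^'m"
  assumes "0 < \<gamma>"
    and minimal: "\<And>x z. feas_CC k x z \<Longrightarrow> persp_dom x z \<Longrightarrow> obj_real A y \<gamma> xs zs \<le> obj_real A y \<gamma> x z"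
    and "feas_CC k xs zs" "persp_dom xs zs" "persp_dom x z" "card T \<le> k"
  defines "\<delta> \<equiv> ($) (screening_score A y xs)"
  shows "obj_real A y \<gamma> xs zs + \<gamma> * (sum \<delta> T - (\<Sum>j\<in>UNIV. z$j * \<delta> j)) \<le> obj_real A y \<gamma> x z"
proof -
  define r where "r = y - A *v xs"
  define zT :: "real^'n" where "zT = (\<chi> j. if j \<in> T then 1 else 0)"
  define xT :: "real^'n" where "xT = (\<chi> j. \<gamma> * zT$j * (column j A \<bullet> r))"
  have "(\<Sum>j\<in>UNIV. zT$j) = real (card T)"
    using sum_indicator_mult[of T "\<lambda>_. 1"] by (simp add: zT_def)
  then have "feas_CC k xT zT"
    using assms(6) by (simp add: feas_CC_def zT_def)
  moreover have "persp_dom xT zT"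
    by (simp add: persp_dom_def xT_def zT_def)
  ultimately have first_order: "2 * (r \<bullet> (A *v xT)) - (1/\<gamma>) * persp_sum xT zT
                                \<le> 2 * (r \<bullet> (A *v xs)) - (1/\<gamma>) * persp_sum xs zs"
    unfolding r_def using assms(1,3,4) minimal by (intro obj_real_first_order) auto
  have "r \<bullet> (A *v xT) = (\<Sum>j\<in>UNIV. (if j \<in> T then 1 else 0) * (\<gamma> * \<delta> j))"
    by (intro trans[OF inner_matrix_vector_mult] sum.cong)
       (auto simp: xT_def zT_def \<delta>_def screening_score_def r_def power2_eq_square)
  then have inner_xT: "r \<bullet> (A *v xT) = \<gamma> * sum \<delta> T"
    by (simp add: sum_indicator_mult sum_distrib_left)
  have "persp_sum xT zT = (\<Sum>j\<in>UNIV. (if j \<in> T then 1 else 0) * (\<gamma>\<^sup>2 * \<delta> j))"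
    unfolding persp_sum_def
    by (intro sum.cong) (auto simp: xT_def zT_def \<delta>_def screening_score_def r_def power2_eq_square)
  then have "(1/\<gamma>) * persp_sum xT zT = \<gamma> * sum \<delta> T"
    using assms(1) by (simp add: sum_indicator_mult sum_distrib_left power2_eq_square)
  moreover have "2 * (r \<bullet> y) - r \<bullet> r - \<gamma> * (\<Sum>j\<in>UNIV. z$j * \<delta> j) \<le> obj_real A y \<gamma> x z"
    using obj_real_weak_duality[OF assms(1,5), of r] by (simp add: \<delta>_def screening_score_def r_def)
  moreover have "r \<bullet> y = r \<bullet> r + r \<bullet> (A *v xs)"
    by (simp add: r_def inner_diff_left inner_commute)
  moreover have "obj_real A y \<gamma> xs zs = r \<bullet> r + (1/\<gamma>) * persp_sum xs zs"
    by (simp add: obj_real_def r_def power2_norm_eq_inner)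
  ultimately show ?thesis
    using first_order inner_xT by (simp add: right_diff_distrib)
qed

subsection \<open>Order statistics\<close>

definition desc_values :: "real^'n \<Rightarrow> real list" where
  "desc_values d = rev (sorted_list_of_multiset (image_mset (\<lambda>i. d$i) (mset_set (UNIV::'n set))))"

lemma kth_largest_desc_values: "kth_largest d j = desc_values d ! (j - 1)" for d :: "real^'n"
  by (simp add: kth_largest_def desc_values_def)

lemma length_filter_desc_values:
  fixes d :: "real^'n"
  shows "length (filter P (desc_values d)) = card {i. P (d$i)}"
proof -
  have "length (filter P (desc_values d)) = size (filter_mset P (mset (desc_values d)))"
    by (metis mset_filter size_mset)
  also have "\<dots> = size (filter_mset (\<lambda>i. P (d$i)) (mset_set (UNIV::'n set)))"
    by (simp add: desc_values_def filter_mset_image_mset)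
  finally show ?thesis by simp
qed

lemma length_desc_values: "length (desc_values d) = CARD('n)" for d :: "real^'n"
  using length_filter_desc_values[of "\<lambda>_. True" d] by simp

lemma desc_values_antimono:
  assumes "q \<le> p" "p < length (desc_values d)"
  shows "desc_values d ! p \<le> desc_values d ! q"
  using assms by (simp add: desc_values_def rev_nth sorted_nth_mono)

lemma card_ge_kth_largest:
  fixes d :: "real^'n"
  assumes "1 \<le> j" "j \<le> CARD('n)"
  shows "j \<le> card {i. kth_largest d j \<le> d$i}"
proof -
  let ?L = "desc_values d"
  have "{0..<j} \<subseteq> {p. p < length ?L \<and> ?L ! (j-1) \<le> ?L ! p}"
  proof
    fix p assume "p \<in> {0..<j}"
    then have "p \<le> j - 1" "j - 1 < length ?L" using assms by (auto simp: length_desc_values)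
    then show "p \<in> {p. p < length ?L \<and> ?L ! (j-1) \<le> ?L ! p}"
      using desc_values_antimono[of p "j-1" d] by simp
  qed
  then have "j \<le> card {p. p < length ?L \<and> ?L ! (j-1) \<le> ?L ! p}"
    using card_mono[of "{p. p < length ?L \<and> ?L ! (j-1) \<le> ?L ! p}" "{0..<j}"] by simp
  then show ?thesis
    by (simp add: kth_largest_desc_values length_filter_conv_card[symmetric] length_filter_desc_values)
qed

lemma card_gt_kth_largest:
  fixes d :: "real^'n"
  assumes "1 \<le> j" "j \<le> CARD('n)"
  shows "card {i. kth_largest d j < d$i} < j"
proof -
  let ?L = "desc_values d"
  have "{p. p < length ?L \<and> ?L ! (j-1) < ?L ! p} \<subseteq> {0..<j-1}"
  proof
    fix p assume "p \<in> {p. p < length ?L \<and> ?L ! (j-1) < ?L ! p}"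
    then have "p < length ?L" "\<not> ?L ! p \<le> ?L ! (j-1)" by auto
    then have "\<not> j-1 \<le> p" using desc_values_antimono[of "j-1" p d] by blast
    then show "p \<in> {0..<j-1}" by simp
  qed
  then have "card {p. p < length ?L \<and> ?L ! (j-1) < ?L ! p} \<le> j - 1"
    using card_mono[of "{0..<j-1}"] by fastforce
  then have "card {p. p < length ?L \<and> ?L ! (j-1) < ?L ! p} < j"
    using assms(1) by linarith
  then show ?thesis
    by (simp add: kth_largest_desc_values length_filter_conv_card[symmetric] length_filter_desc_values)
qed

lemma kth_largest_in_range:
  fixes d :: "real^'n"
  assumes "1 \<le> j" "j \<le> CARD('n)"
  shows "kth_largest d j \<in> range (\<lambda>i. d$i)"
proof -
  have "desc_values d ! (j-1) \<in> set (desc_values d)"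
    using assms by (intro nth_mem) (simp add: length_desc_values)
  then show ?thesis
    by (simp add: kth_largest_desc_values desc_values_def)
qed

subsection \<open>Exchanging one index of a support\<close>

lemma exchange_out_of_support:
  fixes d :: "'n::finite \<Rightarrow> real"
  assumes "i \<in> S" "card S \<le> k" "k \<le> card {j. L \<le> d j}"
  obtains T where "card T \<le> k" "L - d i \<le> sum d T - sum d S"
proof -
  have "card (S - {i}) < k" using assms(1,2) card_gt_0_iff[of S] by auto
  then have "\<not> {j. L \<le> d j} \<subseteq> S - {i}"
    using assms(3) card_mono[of "S - {i}" "{j. L \<le> d j}"] by auto
  then obtain j where j: "L \<le> d j" "j \<notin> S - {i}" by auto
  show ?thesis
  proof
    show "card (insert j (S - {i})) \<le> k"
      using \<open>card (S - {i}) < k\<close> j(2) by simp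
    have "sum d (insert j (S - {i})) = d j + (sum d S - d i)"
      using j(2) assms(1) by (simp add: sum_diff1)
    with j(1) show "L - d i \<le> sum d (insert j (S - {i})) - sum d S" by simp
  qed
qed

lemma exchange_into_support:
  fixes d :: "'n::finite \<Rightarrow> real"
  assumes "i \<notin> S" "card S \<le> k" "card {j. L < d j} \<le> k" "0 \<le> L"
  obtains T where "card T \<le> k" "d i - L \<le> sum d T - sum d S"
proof (cases "card S < k")
  case True
  show ?thesis
  proof
    show "card (insert i S) \<le> k" using True assms(1) by simp
    show "d i - L \<le> sum d (insert i S) - sum d S" using assms(1,4) by simp
  qed
next
  case False
  with assms(1,2) have card_U: "card (insert i S) = Suc k" by simp
  then have "\<not> insert i S \<subseteq> {j. L < d j}"
    using assms(3) card_mono[of "{j. L < d j}" "insert i S"] by auto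
  then obtain m where "m \<in> insert i S" "\<not> L < d m" by (auto simp only: subset_iff mem_Collect_eq)
  then have m: "m \<in> insert i S" "d m \<le> L" by auto
  show ?thesis
  proof
    show "card (insert i S - {m}) \<le> k" using card_U m(1) by simp
    have "sum d (insert i S - {m}) = d i + sum d S - d m"
      using m(1) assms(1) by (simp add: sum_diff1)
    with m(2) show "d i - L \<le> sum d (insert i S - {m}) - sum d S" by simp
  qed
qed

subsection \<open>Optimal solutions\<close>

lemma zeta_CC_le_obj: "feas_CC k x z \<Longrightarrow> zeta_CC A y \<gamma> k \<le> obj A y \<gamma> x z"
  unfolding zeta_CC_def by (rule INF_lower2[of "(x, z)"]) auto

lemma opt_CC_persp_dom:
  assumes "0 < \<gamma>" "opt_CC A y \<gamma> k xs zs"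
  shows "persp_dom xs zs"
proof (rule persp_dom_if_obj_finite[OF assms(1)])
  show "\<forall>j. 0 \<le> zs$j" using assms(2) by (simp add: opt_CC_def feas_CC_def)
  have "obj A y \<gamma> xs zs \<le> obj A y \<gamma> 0 0"
    using assms(2) zeta_CC_le_obj[of k 0 0] by (simp add: opt_CC_def feas_CC_def)
  also have "\<dots> = ereal ((norm y)\<^sup>2)"
    by (simp add: obj_eq_obj_real persp_dom_def obj_real_def persp_sum_def)
  finally show "obj A y \<gamma> xs zs \<noteq> \<infinity>" by auto
qed

lemma zeta_CC_eq_obj_real:
  assumes "0 < \<gamma>" "opt_CC A y \<gamma> k xs zs"
  shows "zeta_CC A y \<gamma> k = ereal (obj_real A y \<gamma> xs zs)"
  using assms(2) opt_CC_persp_dom[OF assms] by (simp add: opt_CC_def obj_eq_obj_real)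

lemma opt_CC_minimal:
  assumes "0 < \<gamma>" "opt_CC A y \<gamma> k xs zs" "feas_CC k x z" "persp_dom x z"
  shows "obj_real A y \<gamma> xs zs \<le> obj_real A y \<gamma> x z"
proof -
  have "ereal (obj_real A y \<gamma> xs zs) \<le> obj A y \<gamma> x z"
    using zeta_CC_le_obj[OF assms(3), of A y \<gamma>] zeta_CC_eq_obj_real[OF assms(1,2)] by simp
  then show ?thesis by (simp add: obj_eq_obj_real[OF assms(4)])
qed

lemma feas_MIPC_binary: "feas_MIPC k x z \<Longrightarrow> z$j = 0 \<or> z$j = 1"
  by (simp add: feas_MIPC_def)

lemma feas_MIPC_persp_dom: "feas_MIPC k x z \<Longrightarrow> persp_dom x z"
  unfolding persp_dom_def
proof (intro allI conjI impI)
  fix j assume feas: "feas_MIPC k x z"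
  then show "0 \<le> z$j" using feas_MIPC_binary[of k x z j] by auto
  assume "z$j = 0"
  with feas show "x$j = 0" by (metis diff_zero feas_MIPC_def mult_1_right)
qed

lemma feas_MIPC_sum_mult:
  fixes f :: "'n::finite \<Rightarrow> real"
  assumes "feas_MIPC k x z"
  shows "(\<Sum>j\<in>UNIV. z$j * f j) = sum f {j. z$j = 1}"
proof -
  have "z$j * f j = (if j \<in> {j. z$j = 1} then 1 else 0) * f j" for j
    using feas_MIPC_binary[OF assms, of j] by (cases "z$j = 1") auto
  then have "(\<Sum>j\<in>UNIV. z$j * f j) = (\<Sum>j\<in>UNIV. (if j \<in> {j. z$j = 1} then 1 else 0) * f j)"
    by (rule sum.cong[OF refl])
  then show ?thesis by (simp only: sum_indicator_mult)
qed

lemma feas_MIPC_card_support: "feas_MIPC k x z \<Longrightarrow> card {j. z$j = 1} \<le> k"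
  using feas_MIPC_sum_mult[of k x z "\<lambda>_. 1"] by (simp add: feas_MIPC_def)

lemma opt_MIPC_exchange_bound:
  fixes A :: "real^'n^'m"
  assumes "0 < \<gamma>" "opt_CC A y \<gamma> k xs zs" "zeta_C A y \<gamma> k \<le> ereal zbar" "opt_MIPC A y \<gamma> k x z"
    and "card T \<le> k"
    and "D \<le> sum (($) (screening_score A y xs)) T - sum (($) (screening_score A y xs)) {j. z$j = 1}"
  shows "obj_real A y \<gamma> xs zs + \<gamma> * D \<le> zbar"
proof -
  let ?\<delta> = "($) (screening_score A y xs)"
  have feas: "feas_MIPC k x z" using assms(4) by (simp add: opt_MIPC_def)
  have "ereal (obj_real A y \<gamma> x z) = zeta_C A y \<gamma> k"
    using assms(4) feas_MIPC_persp_dom[OF feas] by (simp add: opt_MIPC_def obj_eq_obj_real)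
  with assms(3) have "obj_real A y \<gamma> x z \<le> zbar" by (metis ereal_less_eq(3))
  moreover have "obj_real A y \<gamma> xs zs + \<gamma> * (sum ?\<delta> T - sum ?\<delta> {j. z$j = 1}) \<le> obj_real A y \<gamma> x z"
    using obj_real_lower_bound[OF assms(1) opt_CC_minimal[OF assms(1,2)] _ opt_CC_persp_dom[OF assms(1,2)]
        feas_MIPC_persp_dom[OF feas] assms(5)] assms(2)
    by (simp add: opt_CC_def feas_MIPC_sum_mult[OF feas])
  moreover have "\<gamma> * D \<le> \<gamma> * (sum ?\<delta> T - sum ?\<delta> {j. z$j = 1})"
    using assms(1,6) by (intro mult_left_mono) auto
  ultimately show ?thesis by linarith
qed

lemma opt_MIPC_screening_zero:
  fixes A :: "real^'n^'m"
  assumes "0 < \<gamma>" "1 \<le> k" "k \<le> CARD('n)"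
    and "opt_CC A y \<gamma> k xs zs" "zeta_C A y \<gamma> k \<le> ereal zbar" "opt_MIPC A y \<gamma> k x z"
    and "ereal zbar < zeta_CC A y \<gamma> k
           - ereal (\<gamma> * (screening_score A y xs $ i - kth_largest (screening_score A y xs) k))"
  shows "z$i = 0"
proof (rule ccontr)
  let ?\<delta> = "screening_score A y xs"
  have feas: "feas_MIPC k x z" using assms(6) by (simp add: opt_MIPC_def)
  assume "z$i \<noteq> 0"
  then have "i \<in> {j. z$j = 1}" using feas_MIPC_binary[OF feas, of i] by simp
  moreover have "card {j. z$j = 1} \<le> k" by (rule feas_MIPC_card_support[OF feas])
  moreover have "k \<le> card {j. kth_largest ?\<delta> k \<le> ?\<delta>$j}"
    using card_ge_kth_largest[OF assms(2,3)] by simp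
  ultimately obtain T where "card T \<le> k"
    "kth_largest ?\<delta> k - ?\<delta>$i \<le> sum (($) ?\<delta>) T - sum (($) ?\<delta>) {j. z$j = 1}"
    using exchange_out_of_support by metis
  then have "obj_real A y \<gamma> xs zs + \<gamma> * (kth_largest ?\<delta> k - ?\<delta>$i) \<le> zbar"
    by (rule opt_MIPC_exchange_bound[OF assms(1,4,5,6)])
  with assms(7) show False
    by (simp add: zeta_CC_eq_obj_real[OF assms(1,4)] algebra_simps)
qed

lemma opt_MIPC_screening_one:
  fixes A :: "real^'n^'m"
  assumes "0 < \<gamma>" "k < CARD('n)"
    and "opt_CC A y \<gamma> k xs zs" "zeta_C A y \<gamma> k \<le> ereal zbar" "opt_MIPC A y \<gamma> k x z"
    and "ereal zbar < zeta_CC A y \<gamma> k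
           + ereal (\<gamma> * (screening_score A y xs $ i - kth_largest (screening_score A y xs) (k+1)))"
  shows "z$i = 1"
proof (rule ccontr)
  let ?\<delta> = "screening_score A y xs"
  have feas: "feas_MIPC k x z" using assms(5) by (simp add: opt_MIPC_def)
  assume "z$i \<noteq> 1"
  then have "i \<notin> {j. z$j = 1}" by simp
  moreover have "card {j. z$j = 1} \<le> k" by (rule feas_MIPC_card_support[OF feas])
  moreover have "card {j. kth_largest ?\<delta> (k+1) < ?\<delta>$j} \<le> k"
    using card_gt_kth_largest[of "k+1" ?\<delta>] assms(2) by simp
  moreover have "0 \<le> kth_largest ?\<delta> (k+1)"
    using kth_largest_in_range[of "k+1" ?\<delta>] assms(2) by (auto simp: screening_score_def)
  ultimately obtain T where "card T \<le> k"
    "?\<delta>$i - kth_largest ?\<delta> (k+1) \<le> sum (($) ?\<delta>) T - sum (($) ?\<delta>) {j. z$j = 1}"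
    using exchange_into_support by metis
  then have "obj_real A y \<gamma> xs zs + \<gamma> * (?\<delta>$i - kth_largest ?\<delta> (k+1)) \<le> zbar"
    by (rule opt_MIPC_exchange_bound[OF assms(1,3,4,5)])
  with assms(6) show False
    by (simp add: zeta_CC_eq_obj_real[OF assms(1,3)])
qed

theorem proposition2:
  fixes A :: "real^'n^'m" and y :: "real^'m" and \<gamma> :: real and k :: nat
    and xs zs :: "real^'n" and zbar :: real and x z :: "real^'n" and i :: 'n
  assumes "\<gamma> > 0" and "1 \<le> k" and "k \<le> CARD('n) - 1"
    and "opt_CC A y \<gamma> k xs zs"
    and "ereal zbar \<ge> zeta_C A y \<gamma> k"
    and "opt_MIPC A y \<gamma> k x z"
  defines "\<delta> \<equiv> (\<chi> j. (column j A \<bullet> (y - A *v xs))^2)"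
  shows "(\<delta>$i \<le> kth_largest \<delta> (k+1) \<and>
            zeta_CC A y \<gamma> k - ereal (\<gamma> * (\<delta>$i - kth_largest \<delta> k)) > ereal zbar \<longrightarrow> z$i = 0)
       \<and> (\<delta>$i \<ge> kth_largest \<delta> k \<and>
            zeta_CC A y \<gamma> k + ereal (\<gamma> * (\<delta>$i - kth_largest \<delta> (k+1))) > ereal zbar \<longrightarrow> z$i = 1)"
proof -
  have "k < CARD('n)" using assms(2,3) by linarith
  then show ?thesis
    using opt_MIPC_screening_zero[OF assms(1,2) _ assms(4,5,6), of i]
      opt_MIPC_screening_one[OF assms(1) _ assms(4,5,6), of i]
    unfolding \<delta>_def screening_score_def[symmetric] by auto
qed

end
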